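(* Let $\Phi=\bigwedge_{i=1}^m f_i\mid g_i$ be a system of divisibility constraints in $d$ variables with the elimination property for a total order $\preceq$ of its variables. Then (i) $|\Delta(\Phi)|\le 2m^2(d+2)$, and (ii) every coefficient and constant of every polynomial in $\Delta(\Phi)$ has bit length at most $(d+2)(\langle\|\Phi\|_\infty\rangle+1)$, i.e. $\langle\|\Delta(\Phi)\|_\infty\rangle\le(d+2)(\langle\|\Phi\|_\infty\rangle+1)$.
   Context: Linear polynomials: $f=a_1x_1+\dots+a_dx_d+c$ with integer coefficients; $\gcd(f)=\gcd(a_1,\dots,a_d,c)$; $f$ is primitive if $f\ne0$ and $\gcd(f)=1$; the primitive part of a non-zero $g$ is the unique primitive $f$ with $g=\gcd(g)f$. A system of divisibility constraints is $\Phi=\bigwedge_{i=1}^m f_i\mid g_i$ with $m\ge1$, linear $f_i\ne0$, $g_i$; $\mathrm{terms}(\Phi)=\{f_i,g_i\}$. Divisibility module: for primitive $f$, $M_f(\Phi)$ is the smallest set of linear polynomials containing $f$, closed under integer linear combinations, and such that whenever $g\mid h$ is a constraint of $\Phi$ and $b\cdot g\in M_f(\Phi)$ for some $b\in\mathbb Z$, then $b\cdot h\in M_f(\Phi)$. Leading variable: for a total order $x_1\preceq\dots\preceq x_d$, $\mathrm{lv}(f)$ is the largest variable with non-zero coefficient in $f$, and $\mathrm{lv}(f)=\bot=:x_0$ for constant $f$. Elimination property for $\preceq$: for every primitive part $f$ of a polynomial appearing as a left-hand side in $\Phi$ and every $0\le k\le d$, the set $\{g:\mathrm{lv}(g)\preceq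 x_k\text{ and } f\mid g\text{ appears in }\Phi\}$ is a linearly independent set forming a basis of $M_f(\Phi)\cap\mathbb Z[x_1,\dots,x_k]$. S-polynomials: for $f,g$ with $\mathrm{lv}(f)=x_l$, $\mathrm{lv}(g)=x_k$, $S(f,g)=b_k f-a_l g$ where $a_l$ is the coefficient of $x_l$ in $f$ and $b_k$ that of $x_k$ in $g$ (if $f$ is constant, $a_l:=f$; if $g$ is constant, $b_k:=g$). For primitive $f$, $\Delta_f(\Phi)$ is the smallest set containing $\mathrm{terms}(\Phi)$ such that whenever $f\mid g$ occurs in $\Phi$ and $h\in\Delta_f(\Phi)$ with $\mathrm{lv}(g)=\mathrm{lv}(h)$, then $S(g,h)\in\Delta_f(\Phi)$; $\Delta(\Phi)$ is the union of $\Delta_f(\Phi)$ over all primitive parts $f$ of polynomials in $\mathrm{terms}(\Phi)$. $\|\cdot\|_\infty$ of a set of polynomials is the maximum absolute value of their coefficients and constants; $\langle a\rangle=1+\lceil\log_2(|a|+1)\rceil$. *)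

theory Defs
  imports Complex_Main
begin

text \<open>Linear polynomials in the variables x_1..x_d with integer coefficients are
represented as functions f :: nat => int, where f 0 is the constant term,
f i (1 <= i <= d) is the coefficient of x_i, and f i = 0 for i > d.
A total order on the variables is given by a rank function rk, a bijection of
{1..d} onto itself: x_i precedes x_j iff rk i <= rk j.  The bottom element
x_0 (for constants) is encoded by the index 0.\<close>

type_synonym lin = "nat \<Rightarrow> int"

definition in_vars :: "nat \<Rightarrow> lin \<Rightarrow> bool" where
  "in_vars d f \<longleftrightarrow> (\<forall>i>d. f i = 0)"

definition content :: "nat \<Rightarrow> lin \<Rightarrow> int" where
  "content d f = Gcd (f ` {0..d})"

definition primitive :: "nat \<Rightarrow> lin \<Rightarrow> bool" where
  "primitive d f \<longleftrightarrow> f \<noteq> (\<lambda>_. 0) \<and> content d f = 1"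

definition prim_part :: "nat \<Rightarrow> lin \<Rightarrow> lin" where
  "prim_part d g = (\<lambda>i. g i div content d g)"

text \<open>Systems of divisibility constraints: list of pairs (f_i, g_i) meaning f_i | g_i.\<close>
type_synonym system = "(lin \<times> lin) list"

definition terms :: "system \<Rightarrow> lin set" where
  "terms \<Phi> = fst ` set \<Phi> \<union> snd ` set \<Phi>"

definition lhs_polys :: "system \<Rightarrow> lin set" where
  "lhs_polys \<Phi> = fst ` set \<Phi>"

definition wf_system :: "nat \<Rightarrow> system \<Rightarrow> bool" where
  "wf_system d \<Phi> \<longleftrightarrow> length \<Phi> \<ge> 1 \<and> (\<forall>(f, g) \<in> set \<Phi>. f \<noteq> (\<lambda>_. 0) \<and> in_vars d f \<and> in_vars d g)"

inductive_set divmod :: "system \<Rightarrow> lin \<Rightarrow> lin set" for \<Phi> f where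
  base: "f \<in> divmod \<Phi> f"
| zero: "(\<lambda>_. 0) \<in> divmod \<Phi> f"
| add: "p \<in> divmod \<Phi> f \<Longrightarrow> q \<in> divmod \<Phi> f \<Longrightarrow> (\<lambda>i. p i + q i) \<in> divmod \<Phi> f"
| smult: "p \<in> divmod \<Phi> f \<Longrightarrow> (\<lambda>i. c * p i) \<in> divmod \<Phi> f"
| divc: "(g, h) \<in> set \<Phi> \<Longrightarrow> (\<lambda>i. b * g i) \<in> divmod \<Phi> f \<Longrightarrow> (\<lambda>i. b * h i) \<in> divmod \<Phi> f"

definition lv :: "(nat \<Rightarrow> nat) \<Rightarrow> nat \<Rightarrow> lin \<Rightarrow> nat" where
  "lv rk d f = (if \<forall>i\<in>{1..d}. f i = 0 then 0
     else (THE i. i \<in> {1..d} \<and> f i \<noteq> 0 \<and> (\<forall>j\<in>{1..d}. f j \<noteq> 0 \<longrightarrow> rk j \<le> rk i)))"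

definition lv_rank :: "(nat \<Rightarrow> nat) \<Rightarrow> nat \<Rightarrow> lin \<Rightarrow> nat" where
  "lv_rank rk d f = (if lv rk d f = 0 then 0 else rk (lv rk d f))"

text \<open>coefficient of the leading variable; the constant itself if f is constant\<close>
definition lc :: "(nat \<Rightarrow> nat) \<Rightarrow> nat \<Rightarrow> lin \<Rightarrow> int" where
  "lc rk d f = f (lv rk d f)"

definition spoly :: "(nat \<Rightarrow> nat) \<Rightarrow> nat \<Rightarrow> lin \<Rightarrow> lin \<Rightarrow> lin" where
  "spoly rk d f g = (\<lambda>i. lc rk d g * f i - lc rk d f * g i)"

definition int_span :: "lin set \<Rightarrow> lin set" where
  "int_span S = {h. \<exists>c. h = (\<lambda>i. \<Sum>g\<in>S. c g * g i)}"

definition lin_indep :: "lin set \<Rightarrow> bool" where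
  "lin_indep S \<longleftrightarrow> (\<forall>c. (\<forall>i. (\<Sum>g\<in>S. c g * g i) = 0) \<longrightarrow> (\<forall>g\<in>S. c g = 0))"

text \<open>Z[x_1,...,x_k]: polynomials in the k smallest variables of the order\<close>
definition poly_upto :: "(nat \<Rightarrow> nat) \<Rightarrow> nat \<Rightarrow> nat \<Rightarrow> lin set" where
  "poly_upto rk d k = {g. in_vars d g \<and> (\<forall>i\<in>{1..d}. rk i > k \<longrightarrow> g i = 0)}"

definition elimination_property :: "(nat \<Rightarrow> nat) \<Rightarrow> nat \<Rightarrow> system \<Rightarrow> bool" where
  "elimination_property rk d \<Phi> \<longleftrightarrow>
    (\<forall>f \<in> prim_part d ` lhs_polys \<Phi>. \<forall>k \<le> d.
       (let S = {g. lv_rank rk d g \<le> k \<and> (f, g) \<in> set \<Phi>} in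
          lin_indep S \<and> int_span S = divmod \<Phi> f \<inter> poly_upto rk d k))"

inductive_set Delta_f :: "(nat \<Rightarrow> nat) \<Rightarrow> nat \<Rightarrow> system \<Rightarrow> lin \<Rightarrow> lin set"
  for rk d \<Phi> f where
  tm: "t \<in> terms \<Phi> \<Longrightarrow> t \<in> Delta_f rk d \<Phi> f"
| spol: "(f, g) \<in> set \<Phi> \<Longrightarrow> h \<in> Delta_f rk d \<Phi> f \<Longrightarrow> lv rk d g = lv rk d h
         \<Longrightarrow> spoly rk d g h \<in> Delta_f rk d \<Phi> f"

definition Delta :: "(nat \<Rightarrow> nat) \<Rightarrow> nat \<Rightarrow> system \<Rightarrow> lin set" where
  "Delta rk d \<Phi> = (\<Union>f \<in> prim_part d ` {t \<in> terms \<Phi>. t \<noteq> (\<lambda>_. 0)}. Delta_f rk d \<Phi> f)"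

definition norm_inf :: "nat \<Rightarrow> lin set \<Rightarrow> int" where
  "norm_inf d P = Max ({\<bar>p i\<bar> | p i. p \<in> P \<and> i \<le> d} \<union> {0})"

definition bitlen :: "int \<Rightarrow> int" where
  "bitlen a = 1 + \<lceil>log 2 (real_of_int \<bar>a\<bar> + 1)\<rceil>"

end

theory Submission
  imports Defs
begin

(* Under the elimination property, the right-hand sides g of the constraints f | g with a common
   left-hand side f have pairwise distinct leading variables: the S-polynomial of two of them with
   the same leading variable lies in the span of the right-hand sides with smaller leading variable,
   contradicting linear independence. So from any h at most one S-polynomial step is available in
   Delta_f, and Delta_f is the union of the orbits of terms(Phi) under this reduction map. A
   reduction strictly lowers the leading variable (or turns a constant into the fixed point 0),
   hence every orbit has at most d + 2 elements, giving |Delta| <= m * 2m * (d + 2); and a reduction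
   multiplies the size of the coefficients by at most 2 ||Phi||, giving the bit-length bound. *)

lemma lin_indep_pair_coeffs_zero:
  assumes indep: "lin_indep S" and fin: "finite S" and T: "T \<subseteq> S"
    and ab: "a \<in> S" "b \<in> S" "a \<noteq> b" "a \<notin> T" "b \<notin> T"
    and span: "(\<lambda>i. \<alpha> * a i + \<beta> * b i) \<in> int_span T"
  shows "\<alpha> = 0 \<and> \<beta> = 0"
proof -
  obtain c where c: "\<And>i. \<alpha> * a i + \<beta> * b i = (\<Sum>s\<in>T. c s * s i)"
    using span unfolding int_span_def by (auto simp: fun_eq_iff)
  define c' where "c' s = (if s = a then \<alpha> else if s = b then \<beta> else if s \<in> T then - c s else 0)" for s
  have "(\<Sum>s\<in>S. c' s * s i) = 0" for i
  proof -
    have "(\<Sum>s\<in>S. c' s * s i) = (\<Sum>s\<in>S. (if s = a then \<alpha> * a i else 0)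
       + (if s = b then \<beta> * b i else 0) + (if s \<in> T then - (c s * s i) else 0))"
      by (rule sum.cong) (use ab in \<open>auto simp: c'_def\<close>)
    also have "\<dots> = \<alpha> * a i + \<beta> * b i - (\<Sum>s\<in>T. c s * s i)"
      using fin ab T by (simp add: sum.distrib sum.inter_restrict[symmetric] Int_absorb1 sum_negf)
    finally show ?thesis using c by simp
  qed
  then have "c' a = 0" "c' b = 0" using indep ab unfolding lin_indep_def by blast+
  then show ?thesis using ab by (simp add: c'_def)
qed

lemma funpow_eq_funpow_min:
  fixes F :: "'a \<Rightarrow> 'a" and \<mu> :: "'a \<Rightarrow> nat"
  assumes closed: "\<And>x. x \<in> A \<Longrightarrow> F x \<in> A"
    and decreasing: "\<And>x. x \<in> A \<Longrightarrow> F x \<noteq> x \<Longrightarrow> \<mu> (F x) < \<mu> x"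
    and bounded: "\<And>x. x \<in> A \<Longrightarrow> \<mu> x \<le> B" and x: "x \<in> A"
  shows "(F ^^ n) x = (F ^^ min n B) x"
proof -
  have fixed: "F ((F ^^ r) y) = (F ^^ r) y" if "y \<in> A" "\<mu> y \<le> r" for y r
    using that
  proof (induction r arbitrary: y)
    case 0
    then show ?case using decreasing by fastforce
  next
    case (Suc r)
    show ?case
    proof (cases "F y = y")
      case True
      then have "(F ^^ k) y = y" for k by (induction k) auto
      then show ?thesis using True by simp
    next
      case False
      then have "\<mu> (F y) \<le> r" using decreasing Suc.prems by fastforce
      from Suc.IH[OF closed[OF Suc.prems(1)] this]
      show ?thesis by (simp add: funpow_Suc_right del: funpow.simps)
    qed
  qed
  have "(F ^^ (B + j)) x = (F ^^ B) x" for j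
    by (induction j) (use fixed[OF x bounded[OF x]] in auto)
  from this[of "n - B"] show ?thesis by (cases "n \<le> B") auto
qed

lemma power_double_mult_mono:
  fixes N :: int
  assumes "N \<ge> 0" "n \<le> m"
  shows "(2*N)^n * N \<le> (2*N)^m * N"
proof (cases "N = 0")
  case False
  then have "(2*N)^n \<le> (2*N)^m" using assms by (intro power_increasing) auto
  then show ?thesis using assms(1) by (rule mult_right_mono)
qed simp

lemma bitlen_le_of_abs_le:
  fixes N a :: int and d :: nat
  assumes N: "N \<ge> 0" and a: "\<bar>a\<bar> \<le> (2*N)^(d+1) * N"
  shows "bitlen a \<le> int (d + 2) * (bitlen N + 1)"
proof -
  define L where "L = nat \<lceil>log 2 (real_of_int N + 1)\<rceil>"
  have "log 2 (real_of_int N + 1) \<ge> 0" using N by simp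
  then have L: "int L = \<lceil>log 2 (real_of_int N + 1)\<rceil>" unfolding L_def by simp
  have "real_of_int N + 1 = 2 powr log 2 (real_of_int N + 1)" using N by simp
  also have "\<dots> \<le> 2 powr real L"
  proof (rule powr_mono)
    show "log 2 (real_of_int N + 1) \<le> real L"
      using le_of_int_ceiling[of "log 2 (real_of_int N + 1)"] L by (metis of_int_of_nat_eq)
  qed simp
  finally have "real_of_int (N + 1) \<le> real_of_int (2 ^ L)" by (simp add: powr_realpow)
  then have "N < 2 ^ L" by (simp only: of_int_le_iff)
  define E where "E = d + 1 + L * (d + 2)"
  have "\<bar>a\<bar> \<le> 2^(d+1) * N^(d+2)"
    using a by (simp add: power_mult_distrib algebra_simps)
  also have "\<dots> < 2^(d+1) * (2^L)^(d+2)"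
    using power_strict_mono[OF \<open>N < 2 ^ L\<close> N, of "d+2"] by simp
  also have "\<dots> = 2 ^ E" unfolding E_def by (simp add: power_add power_mult mult.commute)
  finally have "\<bar>a\<bar> + 1 \<le> 2 ^ E" by simp
  then have "real_of_int (\<bar>a\<bar> + 1) \<le> real_of_int (2 ^ E)" by (simp only: of_int_le_iff)
  then have "real_of_int \<bar>a\<bar> + 1 \<le> 2 powr real E" by (simp add: powr_realpow)
  then have "log 2 (real_of_int \<bar>a\<bar> + 1) \<le> real E"
    by (subst log_le_iff) auto
  then have "bitlen a \<le> 1 + int E" unfolding bitlen_def by (simp add: ceiling_le_iff)
  also have "\<dots> = int (d+2) * (int L + 1)" unfolding E_def by (simp add: algebra_simps)
  also have "\<dots> \<le> int (d+2) * (bitlen N + 1)"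
    unfolding bitlen_def L using N by (intro mult_left_mono) auto
  finally show ?thesis .
qed

lemma finite_terms: "finite (terms \<Phi>)"
  unfolding terms_def by simp

lemma card_terms_le: "card (terms \<Phi>) \<le> 2 * length \<Phi>"
proof -
  have "card (terms \<Phi>) \<le> card (fst ` set \<Phi>) + card (snd ` set \<Phi>)"
    unfolding terms_def by (rule card_Un_le)
  also have "\<dots> \<le> card (set \<Phi>) + card (set \<Phi>)" by (intro add_mono card_image_le) auto
  also have "\<dots> \<le> 2 * length \<Phi>" using card_length[of \<Phi>] by simp
  finally show ?thesis .
qed

lemma terms_in_vars: "wf_system d \<Phi> \<Longrightarrow> t \<in> terms \<Phi> \<Longrightarrow> in_vars d t"
  unfolding wf_system_def terms_def by auto

lemma finite_abs_coeffs:
  fixes d :: nat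
  assumes "finite P"
  shows "finite {\<bar>p i\<bar> | p i. p \<in> P \<and> i \<le> d}"
  by (rule finite_subset[of _ "(\<lambda>(p,i). \<bar>p i\<bar>) ` (P \<times> {..d})"])
    (use assms in auto)

lemma abs_le_norm_inf:
  assumes "finite P" "t \<in> P" "in_vars d t"
  shows "\<bar>t i\<bar> \<le> norm_inf d P"
proof -
  have "finite {\<bar>p i\<bar> | p i. p \<in> P \<and> i \<le> d}" using assms(1) by (rule finite_abs_coeffs)
  moreover have "\<bar>t i\<bar> \<in> {\<bar>p i\<bar> | p i. p \<in> P \<and> i \<le> d} \<union> {0}"
    using assms unfolding in_vars_def by (cases "i \<le> d") auto
  ultimately show ?thesis unfolding norm_inf_def by (intro Max_ge) auto
qed

lemma norm_inf_nonneg: "finite P \<Longrightarrow> norm_inf d P \<ge> 0"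
  unfolding norm_inf_def by (intro Max_ge finite_UnI finite_abs_coeffs) auto

lemma prim_part_idem:
  assumes "in_vars d t" "t \<noteq> (\<lambda>_. 0)"
  shows "prim_part d (prim_part d t) = prim_part d t"
proof -
  define c where "c = content d t"
  have "\<exists>i\<le>d. t i \<noteq> 0" using assms unfolding in_vars_def by (metis not_le)
  then have "c \<noteq> 0" unfolding c_def content_def by (force simp: Gcd_0_iff image_subset_iff)
  define D where "D = content d (prim_part d t)"
  have "D * c dvd t i" if "i \<le> d" for i
  proof -
    have "D dvd t i div c" unfolding D_def content_def prim_part_def
      using that by (simp add: c_def content_def)
    moreover have "c dvd t i" unfolding c_def content_def using that by auto
    ultimately show ?thesis using \<open>c \<noteq> 0\<close> by (metis dvd_div_iff_mult mult.commute)
  qed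
  then have "D * c dvd c" unfolding c_def content_def by (intro Gcd_greatest) auto
  then have "D dvd 1" using \<open>c \<noteq> 0\<close> by (metis dvd_times_right_cancel_iff mult_1)
  moreover have "D \<ge> 0" unfolding D_def content_def by simp
  ultimately have "D = 1" by simp
  then show ?thesis unfolding D_def by (simp add: prim_part_def)
qed

lemma in_divmod_rhs: "(f, g) \<in> set \<Phi> \<Longrightarrow> g \<in> divmod \<Phi> f"
  using divmod.divc[of f g \<Phi> 1 f] divmod.base[of f \<Phi>] by simp

lemma in_vars_spoly: "in_vars d g \<Longrightarrow> in_vars d h \<Longrightarrow> in_vars d (spoly rk d g h)"
  unfolding in_vars_def spoly_def by simp

lemma lv_const: "\<forall>i\<in>{1..d}. f i = 0 \<Longrightarrow> lv rk d f = 0"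
  unfolding lv_def by simp

lemma spoly_zero_right [simp]: "spoly rk d g (\<lambda>_. 0) = (\<lambda>_. 0)"
  by (simp add: spoly_def lc_def fun_eq_iff)

text \<open>When the right-hand sides of f have distinct leading variables, this is the only
  S-polynomial step that Delta_f can take from h.\<close>
definition reduce_step :: "(nat \<Rightarrow> nat) \<Rightarrow> nat \<Rightarrow> system \<Rightarrow> lin \<Rightarrow> lin \<Rightarrow> lin" where
  "reduce_step rk d \<Phi> f h = (if \<exists>g. (f, g) \<in> set \<Phi> \<and> lv rk d g = lv rk d h
     then spoly rk d (SOME g. (f, g) \<in> set \<Phi> \<and> lv rk d g = lv rk d h) h else h)"

definition reduction_orbits :: "(nat \<Rightarrow> nat) \<Rightarrow> nat \<Rightarrow> system \<Rightarrow> lin \<Rightarrow> lin set" where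
  "reduction_orbits rk d \<Phi> f = (\<lambda>(t, n). (reduce_step rk d \<Phi> f ^^ n) t) ` (terms \<Phi> \<times> {..d+1})"

lemma reduce_step_cases:
  obtains "reduce_step rk d \<Phi> f h = h"
  | g where "(f, g) \<in> set \<Phi>" "lv rk d g = lv rk d h" "reduce_step rk d \<Phi> f h = spoly rk d g h"
proof (cases "\<exists>g. (f, g) \<in> set \<Phi> \<and> lv rk d g = lv rk d h")
  case True
  let ?g = "SOME g. (f, g) \<in> set \<Phi> \<and> lv rk d g = lv rk d h"
  have "(f, ?g) \<in> set \<Phi> \<and> lv rk d ?g = lv rk d h" by (rule someI_ex[OF True])
  moreover have "reduce_step rk d \<Phi> f h = spoly rk d ?g h"
    unfolding reduce_step_def using True by (simp only: if_True)
  ultimately show ?thesis using that by blast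
next
  case False
  then have "reduce_step rk d \<Phi> f h = h" unfolding reduce_step_def by (simp only: if_False)
  then show ?thesis using that by blast
qed

lemma reduce_step_eq_spoly:
  assumes unique: "\<And>g1 g2. (f, g1) \<in> set \<Phi> \<Longrightarrow> (f, g2) \<in> set \<Phi> \<Longrightarrow> lv rk d g1 = lv rk d g2 \<Longrightarrow> g1 = g2"
    and g: "(f, g) \<in> set \<Phi>" "lv rk d g = lv rk d h"
  shows "reduce_step rk d \<Phi> f h = spoly rk d g h"
proof -
  have "(SOME g. (f, g) \<in> set \<Phi> \<and> lv rk d g = lv rk d h) = g"
    using g unique by (intro some_equality) auto
  then show ?thesis using g unfolding reduce_step_def by auto
qed

lemma reduce_step_zero: "reduce_step rk d \<Phi> f (\<lambda>_. 0) = (\<lambda>_. 0)"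
  by (cases rule: reduce_step_cases[of rk d \<Phi> f "\<lambda>_. 0"]) simp_all

lemma in_vars_reduce_step:
  assumes "wf_system d \<Phi>" "in_vars d h"
  shows "in_vars d (reduce_step rk d \<Phi> f h)"
proof (cases rule: reduce_step_cases[of rk d \<Phi> f h])
  case (2 g)
  then have "in_vars d g" using assms(1) unfolding wf_system_def by auto
  then show ?thesis using 2 in_vars_spoly assms(2) by simp
qed (use assms in simp)

lemma abs_reduce_iter_le:
  assumes bound: "\<And>t i. t \<in> terms \<Phi> \<Longrightarrow> \<bar>t i\<bar> \<le> N" and t: "t \<in> terms \<Phi>"
  shows "\<bar>(reduce_step rk d \<Phi> f ^^ n) t i\<bar> \<le> (2*N)^n * N"
proof (induction n arbitrary: i)
  case 0
  then show ?case using bound t by simp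
next
  case (Suc n)
  define h where "h = (reduce_step rk d \<Phi> f ^^ n) t"
  have N: "N \<ge> 0" using bound[OF t, of 0] by simp
  have IH: "\<bar>h j\<bar> \<le> (2*N)^n * N" for j using Suc.IH h_def by simp
  show ?case
  proof (cases rule: reduce_step_cases[of rk d \<Phi> f h])
    case 1
    have "(2*N)^n * N \<le> (2*N)^Suc n * N" using N by (rule power_double_mult_mono) simp
    with IH[of i] have "\<bar>h i\<bar> \<le> (2*N)^Suc n * N" by (rule order_trans)
    then show ?thesis using 1 h_def by simp
  next
    case (2 g)
    have "g \<in> terms \<Phi>" using 2 unfolding terms_def by force
    have "\<bar>spoly rk d g h i\<bar> \<le> \<bar>lc rk d h\<bar> * \<bar>g i\<bar> + \<bar>lc rk d g\<bar> * \<bar>h i\<bar>"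
      unfolding spoly_def by (simp add: abs_mult[symmetric] abs_triangle_ineq4)
    also have "\<dots> \<le> ((2*N)^n * N) * N + N * ((2*N)^n * N)"
      using IH bound[OF \<open>g \<in> terms \<Phi>\<close>] N unfolding lc_def by (intro add_mono mult_mono) auto
    also have "\<dots> = (2*N)^Suc n * N" by (simp add: algebra_simps)
    finally show ?thesis using 2 h_def by simp
  qed
qed

lemma elimination_propertyD:
  assumes "elimination_property rk d \<Phi>" "f \<in> prim_part d ` lhs_polys \<Phi>" "k \<le> d"
  shows "lin_indep {g. lv_rank rk d g \<le> k \<and> (f, g) \<in> set \<Phi>}"
    and "int_span {g. lv_rank rk d g \<le> k \<and> (f, g) \<in> set \<Phi>} = divmod \<Phi> f \<inter> poly_upto rk d k"
  using assms unfolding elimination_property_def Let_def by blast+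

lemma finite_reduction_orbits: "finite (reduction_orbits rk d \<Phi> f)"
  unfolding reduction_orbits_def using finite_terms by simp

lemma card_reduction_orbits_le: "card (reduction_orbits rk d \<Phi> f) \<le> 2 * length \<Phi> * (d + 2)"
proof -
  have "card (reduction_orbits rk d \<Phi> f) \<le> card (terms \<Phi> \<times> {..d+1})"
    unfolding reduction_orbits_def by (rule card_image_le) (simp add: finite_terms)
  also have "\<dots> = card (terms \<Phi>) * (d + 2)" by (simp add: card_cartesian_product)
  also have "\<dots> \<le> 2 * length \<Phi> * (d + 2)" using card_terms_le by (intro mult_right_mono) auto
  finally show ?thesis .
qed

lemma terms_subset_reduction_orbits: "terms \<Phi> \<subseteq> reduction_orbits rk d \<Phi> f"
  unfolding reduction_orbits_def by (force intro: image_eqI[where x = "(_, 0)"])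

lemma abs_reduction_orbits_le:
  assumes bound: "\<And>t i. t \<in> terms \<Phi> \<Longrightarrow> \<bar>t i\<bar> \<le> N" and N: "N \<ge> 0"
    and h: "h \<in> reduction_orbits rk d \<Phi> f"
  shows "\<bar>h i\<bar> \<le> (2*N)^(d+1) * N"
proof -
  obtain t n where t: "t \<in> terms \<Phi>" and n: "n \<le> d + 1" and h: "h = (reduce_step rk d \<Phi> f ^^ n) t"
    using h unfolding reduction_orbits_def by auto
  have "\<bar>h i\<bar> \<le> (2*N)^n * N" unfolding h using bound t by (rule abs_reduce_iter_le)
  also have "\<dots> \<le> (2*N)^(d+1) * N" using N n by (rule power_double_mult_mono)
  finally show ?thesis .
qed

lemma Delta_f_subset_terms:
  assumes "f \<notin> fst ` set \<Phi>"
  shows "Delta_f rk d \<Phi> f \<subseteq> terms \<Phi>"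
proof
  fix x assume "x \<in> Delta_f rk d \<Phi> f"
  then show "x \<in> terms \<Phi>"
  proof (induction rule: Delta_f.induct)
    case (spol g h)
    then show ?case using assms by force
  qed
qed

context
  fixes rk :: "nat \<Rightarrow> nat" and d :: nat
  assumes rk_bij: "bij_betw rk {1..d} {1..d}"
begin

lemma rk_inj: "inj_on rk {1..d}"
  using rk_bij bij_betw_def by blast

lemma lv_nonconst:
  assumes "\<exists>i\<in>{1..d}. f i \<noteq> 0"
  shows "lv rk d f \<in> {1..d} \<and> f (lv rk d f) \<noteq> 0 \<and> (\<forall>j\<in>{1..d}. f j \<noteq> 0 \<longrightarrow> rk j \<le> rk (lv rk d f))"
proof -
  let ?A = "{j\<in>{1..d}. f j \<noteq> 0}"
  have fin: "finite (rk ` ?A)" by simp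
  have "Max (rk ` ?A) \<in> rk ` ?A" using assms by (intro Max_in) auto
  then obtain i where "i \<in> ?A" "Max (rk ` ?A) = rk i" by (rule imageE)
  then have i: "i \<in> ?A" "rk i = Max (rk ` ?A)" by simp_all
  have max: "rk j \<le> rk i" if "j \<in> {1..d}" "f j \<noteq> 0" for j
  proof -
    have "rk j \<in> rk ` ?A" using that by blast
    then show ?thesis using Max_ge[OF fin] i(2) by simp
  qed
  have spec: "i \<in> {1..d} \<and> f i \<noteq> 0 \<and> (\<forall>j\<in>{1..d}. f j \<noteq> 0 \<longrightarrow> rk j \<le> rk i)"
    using i(1) max by blast
  have "\<not> (\<forall>i\<in>{1..d}. f i = 0)" using assms by blast
  then have "lv rk d f = (THE i. i \<in> {1..d} \<and> f i \<noteq> 0 \<and> (\<forall>j\<in>{1..d}. f j \<noteq> 0 \<longrightarrow> rk j \<le> rk i))"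
    unfolding lv_def by (simp only: if_False)
  also have "\<dots> = i"
  proof (rule the_equality)
    fix i' assume i': "i' \<in> {1..d} \<and> f i' \<noteq> 0 \<and> (\<forall>j\<in>{1..d}. f j \<noteq> 0 \<longrightarrow> rk j \<le> rk i')"
    then have "rk i' = rk i" using max spec by (meson antisym)
    then show "i' = i" using rk_inj spec i' by (simp add: inj_on_eq_iff)
  qed (rule spec)
  finally show ?thesis using spec by simp
qed

lemma lv_eq_0_iff: "lv rk d f = 0 \<longleftrightarrow> (\<forall>i\<in>{1..d}. f i = 0)"
proof (cases "\<forall>i\<in>{1..d}. f i = 0")
  case False
  then have "lv rk d f \<in> {1..d}" using lv_nonconst by blast
  then show ?thesis using False by auto
qed (simp add: lv_const)

lemma lv_range:
  assumes "lv rk d f \<noteq> 0"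
  shows "lv rk d f \<in> {1..d}"
proof -
  have "\<exists>i\<in>{1..d}. f i \<noteq> 0" using assms lv_eq_0_iff by metis
  then show ?thesis using lv_nonconst by blast
qed

lemma lv_rank_eq_0_iff: "lv_rank rk d f = 0 \<longleftrightarrow> lv rk d f = 0"
proof (cases "lv rk d f = 0")
  case False
  then have "lv rk d f \<in> {1..d}" by (rule lv_range)
  then have "rk (lv rk d f) \<in> {1..d}" using bij_betwE[OF rk_bij] by blast
  then show ?thesis using False by (simp add: lv_rank_def)
qed (simp add: lv_rank_def)

lemma lv_rank_le_dim: "lv_rank rk d f \<le> d"
proof (cases "lv rk d f = 0")
  case False
  then have "lv rk d f \<in> {1..d}" by (rule lv_range)
  then have "rk (lv rk d f) \<in> {1..d}" using bij_betwE[OF rk_bij] by blast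
  then show ?thesis by (simp add: lv_rank_def)
qed (simp add: lv_rank_def)

lemma lv_rank_le_iff: "lv_rank rk d f \<le> k \<longleftrightarrow> (\<forall>i\<in>{1..d}. rk i > k \<longrightarrow> f i = 0)"
proof (cases "\<forall>i\<in>{1..d}. f i = 0")
  case True
  then show ?thesis by (simp add: lv_rank_def lv_const)
next
  case False
  then have lv: "lv rk d f \<in> {1..d}" "f (lv rk d f) \<noteq> 0"
    and max: "\<forall>j\<in>{1..d}. f j \<noteq> 0 \<longrightarrow> rk j \<le> rk (lv rk d f)"
    using lv_nonconst[of f] by auto
  then have "lv_rank rk d f = rk (lv rk d f)" by (simp add: lv_rank_def)
  then show ?thesis using lv max by (metis le_trans not_le)
qed

lemma lc_eq_0_iff:
  assumes "in_vars d f"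
  shows "lc rk d f = 0 \<longleftrightarrow> f = (\<lambda>_. 0)"
proof
  assume lc: "lc rk d f = 0"
  then have "lv rk d f = 0" using lv_nonconst[of f] lv_eq_0_iff by (auto simp: lc_def)
  then show "f = (\<lambda>_. 0)"
    using lc assms lv_eq_0_iff unfolding lc_def in_vars_def
    by (metis atLeastAtMost_iff less_one not_le not_gr_zero)
qed (simp add: lc_def)

lemma spoly_of_constants:
  assumes "in_vars d g" "in_vars d h" "lv rk d g = 0" "lv rk d h = 0"
  shows "spoly rk d g h = (\<lambda>_. 0)"
proof
  fix i
  show "spoly rk d g h i = 0"
  proof (cases "i = 0")
    case False
    then have "g i = 0 \<and> h i = 0" using assms lv_eq_0_iff unfolding in_vars_def
      by (metis atLeastAtMost_iff less_one not_le not_gr_zero)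
    then show ?thesis by (simp add: spoly_def)
  qed (use assms in \<open>simp add: spoly_def lc_def\<close>)
qed

lemma lv_rank_spoly_less:
  assumes "in_vars d g" "in_vars d h" and eq: "lv rk d g = lv rk d h" and nz: "lv rk d h \<noteq> 0"
  shows "lv_rank rk d (spoly rk d g h) < lv_rank rk d h"
proof -
  define v where "v = lv rk d h"
  have "\<exists>i\<in>{1..d}. h i \<noteq> 0" "\<exists>i\<in>{1..d}. g i \<noteq> 0"
    using nz eq lv_eq_0_iff by metis+
  note h = lv_nonconst[OF this(1)] and g = lv_nonconst[OF this(2)]
  have v: "v \<in> {1..d}" "rk v \<in> {1..d}" using h bij_betwE[OF rk_bij] v_def by auto
  have "spoly rk d g h i = 0" if i: "i \<in> {1..d}" "rk i > rk v - 1" for i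
  proof (cases "rk i = rk v")
    case True
    then have "i = v" using rk_inj i v inj_onD by metis
    then show ?thesis by (simp add: spoly_def lc_def v_def eq)
  next
    case False
    then have "g i = 0" "h i = 0" using h g i v_def eq by (auto simp: not_le[symmetric])
    then show ?thesis by (simp add: spoly_def)
  qed
  then have "lv_rank rk d (spoly rk d g h) \<le> rk v - 1" using lv_rank_le_iff by blast
  moreover have "lv_rank rk d h = rk v" using nz by (simp add: lv_rank_def v_def)
  ultimately show ?thesis using v(2) by (simp add: le_diff_conv2 Suc_le_eq)
qed

lemma reduce_step_progress:
  assumes wf: "wf_system d \<Phi>" and h: "in_vars d h" and ne: "reduce_step rk d \<Phi> f h \<noteq> h"
  shows "reduce_step rk d \<Phi> f (reduce_step rk d \<Phi> f h) = reduce_step rk d \<Phi> f h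
    \<or> lv_rank rk d (reduce_step rk d \<Phi> f h) < lv_rank rk d h"
proof (cases rule: reduce_step_cases[of rk d \<Phi> f h])
  case (2 g)
  have g: "in_vars d g" using wf 2(1) unfolding wf_system_def by auto
  show ?thesis
  proof (cases "lv rk d h = 0")
    case True
    then have "reduce_step rk d \<Phi> f h = (\<lambda>_. 0)"
      using 2 spoly_of_constants[OF g h] by simp
    then show ?thesis using reduce_step_zero by simp
  qed (use 2 lv_rank_spoly_less[OF g h] in simp)
qed (use ne in simp)

text \<open>Each effective step lowers the leading variable, except a step on a constant, which
  yields the fixed point zero; hence the orbit is stationary after d + 1 steps.\<close>
lemma reduce_iter_eq_min:
  assumes wf: "wf_system d \<Phi>" and h: "in_vars d h"
  shows "(reduce_step rk d \<Phi> f ^^ n) h = (reduce_step rk d \<Phi> f ^^ min n (d + 1)) h"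
proof (rule funpow_eq_funpow_min[where A = "{h. in_vars d h}"])
  let ?R = "reduce_step rk d \<Phi> f"
  let ?\<mu> = "\<lambda>h. if ?R h = h then 0 else lv_rank rk d h + 1"
  show "?\<mu> (?R x) < ?\<mu> x" if "x \<in> {h. in_vars d h}" "?R x \<noteq> x" for x
    using reduce_step_progress[OF wf _ that(2)] that by auto
  show "?\<mu> x \<le> d + 1" for x
    using lv_rank_le_dim by simp
qed (use in_vars_reduce_step[OF wf] h in auto)

text \<open>The S-polynomial of two distinct right-hand sides of f with the same leading variable
  would lie in the span of those with smaller leading variable, a linear dependency.\<close>
lemma rhs_eq_if_lv_eq:
  assumes wf: "wf_system d \<Phi>" and el: "elimination_property rk d \<Phi>"
    and f: "f \<in> prim_part d ` lhs_polys \<Phi>"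
    and g1: "(f, g1) \<in> set \<Phi>" and g2: "(f, g2) \<in> set \<Phi>" and eq: "lv rk d g1 = lv rk d g2"
  shows "g1 = g2"
proof (rule ccontr)
  assume ne: "g1 \<noteq> g2"
  have iv1: "in_vars d g1" and iv2: "in_vars d g2" using wf g1 g2 unfolding wf_system_def by auto
  define k where "k = lv_rank rk d g1"
  have k2: "lv_rank rk d g2 = k" using eq by (simp add: k_def lv_rank_def)
  have k: "k \<le> d" using lv_rank_le_dim k_def by simp
  define S where "S = {g. lv_rank rk d g \<le> k \<and> (f, g) \<in> set \<Phi>}"
  define S' where "S' = {g. lv_rank rk d g < k \<and> (f, g) \<in> set \<Phi>}"
  have "finite S" unfolding S_def
    by (rule finite_subset[of _ "snd ` set \<Phi>"]) (auto intro: rev_image_eqI)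
  have "spoly rk d g1 g2 \<in> int_span S'"
  proof (cases "k = 0")
    case True
    then have "lv rk d g1 = 0" using k_def lv_rank_eq_0_iff by simp
    then have "spoly rk d g1 g2 = (\<lambda>_. 0)" using eq spoly_of_constants[OF iv1 iv2] by simp
    moreover have "S' = {}" using True by (simp add: S'_def)
    ultimately show ?thesis by (simp add: int_span_def)
  next
    case False
    have "S' = {g. lv_rank rk d g \<le> k - 1 \<and> (f, g) \<in> set \<Phi>}" using False by (auto simp: S'_def)
    then have span: "int_span S' = divmod \<Phi> f \<inter> poly_upto rk d (k - 1)"
      using elimination_propertyD(2)[OF el f, of "k - 1"] k by simp
    have "(\<lambda>i. lc rk d g2 * g1 i + (- lc rk d g1) * g2 i) \<in> divmod \<Phi> f"
      using g1 g2 by (intro divmod.add divmod.smult in_divmod_rhs)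
    then have "spoly rk d g1 g2 \<in> divmod \<Phi> f" by (simp add: spoly_def)
    moreover have "lv rk d g2 \<noteq> 0" using False k2 lv_rank_eq_0_iff[of g2] by simp
    then have "lv_rank rk d (spoly rk d g1 g2) \<le> k - 1"
      using lv_rank_spoly_less[OF iv1 iv2 eq] k2 by simp
    then have "spoly rk d g1 g2 \<in> poly_upto rk d (k - 1)"
      using lv_rank_le_iff in_vars_spoly[OF iv1 iv2] unfolding poly_upto_def by blast
    ultimately show ?thesis using span by blast
  qed
  then have "(\<lambda>i. lc rk d g2 * g1 i + (- lc rk d g1) * g2 i) \<in> int_span S'"
    by (simp add: spoly_def)
  moreover have "lin_indep S" using elimination_propertyD(1)[OF el f k] unfolding S_def .
  ultimately have "lc rk d g2 = 0 \<and> - lc rk d g1 = 0"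
    using \<open>finite S\<close> g1 g2 ne k2 by (intro lin_indep_pair_coeffs_zero[of S S' g1 g2])
      (auto simp: S_def S'_def k_def)
  then show False using ne lc_eq_0_iff iv1 iv2 by auto
qed

lemma Delta_f_subset_reduction_orbits:
  assumes wf: "wf_system d \<Phi>"
    and unique: "\<And>g1 g2. (f, g1) \<in> set \<Phi> \<Longrightarrow> (f, g2) \<in> set \<Phi> \<Longrightarrow> lv rk d g1 = lv rk d g2 \<Longrightarrow> g1 = g2"
  shows "Delta_f rk d \<Phi> f \<subseteq> reduction_orbits rk d \<Phi> f"
proof
  fix x assume "x \<in> Delta_f rk d \<Phi> f"
  then show "x \<in> reduction_orbits rk d \<Phi> f"
  proof (induction rule: Delta_f.induct)
    case (tm t)
    then show ?case using terms_subset_reduction_orbits by blast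
  next
    case (spol g h)
    let ?R = "reduce_step rk d \<Phi> f"
    obtain t n where t: "t \<in> terms \<Phi>" and "n \<le> d + 1" and h: "h = (?R ^^ n) t"
      using spol.IH unfolding reduction_orbits_def by auto
    have "spoly rk d g h = ?R h" using reduce_step_eq_spoly[OF unique spol.hyps(1,3)] by (rule sym)
    also have "\<dots> = (?R ^^ Suc n) t" unfolding h by simp
    also have "\<dots> = (?R ^^ min (Suc n) (d + 1)) t"
      using reduce_iter_eq_min[OF wf terms_in_vars[OF wf t]] .
    also have "\<dots> \<in> reduction_orbits rk d \<Phi> f"
      unfolding reduction_orbits_def using t by (intro rev_image_eqI[of "(t, min (Suc n) (d + 1))"]) auto
    finally show ?case .
  qed
qed

lemma Delta_subset_reduction_orbits:
  assumes wf: "wf_system d \<Phi>" and el: "elimination_property rk d \<Phi>"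
  shows "Delta rk d \<Phi> \<subseteq> (\<Union>f \<in> fst ` set \<Phi>. reduction_orbits rk d \<Phi> f)"
proof
  fix h assume "h \<in> Delta rk d \<Phi>"
  then obtain f where f: "f \<in> prim_part d ` {t \<in> terms \<Phi>. t \<noteq> (\<lambda>_. 0)}"
    and h: "h \<in> Delta_f rk d \<Phi> f"
    unfolding Delta_def by (rule UN_E)
  then obtain t where t: "t \<in> terms \<Phi>" "t \<noteq> (\<lambda>_. 0)" and f_eq: "f = prim_part d t" by auto
  show "h \<in> (\<Union>f \<in> fst ` set \<Phi>. reduction_orbits rk d \<Phi> f)"
  proof (cases "f \<in> fst ` set \<Phi>")
    case True
    have "f = prim_part d f" using prim_part_idem[OF terms_in_vars[OF wf t(1)] t(2)] f_eq by simp
    then have lhs: "f \<in> prim_part d ` lhs_polys \<Phi>"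
      by (rule image_eqI[where f = "prim_part d"]) (use True in \<open>simp add: lhs_polys_def\<close>)
    have "h \<in> reduction_orbits rk d \<Phi> f"
      using Delta_f_subset_reduction_orbits[OF wf rhs_eq_if_lv_eq[OF wf el lhs]] h ..
    with True show ?thesis by blast
  next
    case False
    have "\<Phi> \<noteq> []" using wf unfolding wf_system_def by auto
    then have f0: "fst (hd \<Phi>) \<in> fst ` set \<Phi>" by simp
    have "h \<in> terms \<Phi>" using Delta_f_subset_terms[OF False] h ..
    then have "h \<in> reduction_orbits rk d \<Phi> (fst (hd \<Phi>))" using terms_subset_reduction_orbits ..
    with f0 show ?thesis by blast
  qed
qed

lemma card_Delta_le:
  assumes wf: "wf_system d \<Phi>" and el: "elimination_property rk d \<Phi>"
  shows "finite (Delta rk d \<Phi>) \<and> card (Delta rk d \<Phi>) \<le> 2 * (length \<Phi>)^2 * (d + 2)"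
proof -
  let ?O = "\<Union>f \<in> fst ` set \<Phi>. reduction_orbits rk d \<Phi> f"
  have sub: "Delta rk d \<Phi> \<subseteq> ?O" using Delta_subset_reduction_orbits[OF wf el] .
  have fin: "finite ?O" using finite_reduction_orbits by simp
  have "card (Delta rk d \<Phi>) \<le> card ?O" using card_mono[OF fin sub] .
  also have "\<dots> \<le> (\<Sum>f \<in> fst ` set \<Phi>. card (reduction_orbits rk d \<Phi> f))"
    by (rule card_UN_le) simp
  also have "\<dots> \<le> card (fst ` set \<Phi>) * (2 * length \<Phi> * (d + 2))"
    using sum_bounded_above[of "fst ` set \<Phi>", OF card_reduction_orbits_le] by simp
  also have "\<dots> \<le> length \<Phi> * (2 * length \<Phi> * (d + 2))"
    using card_image_le[of "set \<Phi>" fst] card_length[of \<Phi>] by (intro mult_right_mono) auto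
  also have "\<dots> = 2 * (length \<Phi>)^2 * (d + 2)" by (simp add: power2_eq_square algebra_simps)
  finally show ?thesis using finite_subset[OF sub fin] by simp
qed

lemma bitlen_Delta_le:
  assumes wf: "wf_system d \<Phi>" and el: "elimination_property rk d \<Phi>"
    and h: "h \<in> Delta rk d \<Phi>"
  shows "bitlen (h i) \<le> int (d + 2) * (bitlen (norm_inf d (terms \<Phi>)) + 1)"
proof -
  let ?N = "norm_inf d (terms \<Phi>)"
  have N: "?N \<ge> 0" using norm_inf_nonneg[OF finite_terms] .
  obtain f where "h \<in> reduction_orbits rk d \<Phi> f"
    using h Delta_subset_reduction_orbits[OF wf el] by blast
  then have "\<bar>h i\<bar> \<le> (2 * ?N)^(d+1) * ?N"
    using abs_le_norm_inf[OF finite_terms _ terms_in_vars[OF wf]] N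
    by (intro abs_reduction_orbits_le)
  then show ?thesis using N by (rule bitlen_le_of_abs_le[rotated])
qed

end

theorem mainTheorem10:
  fixes d :: nat and rk :: "nat \<Rightarrow> nat" and \<Phi> :: system
  assumes "bij_betw rk {1..d} {1..d}"
    and "wf_system d \<Phi>"
    and "elimination_property rk d \<Phi>"
  shows "finite (Delta rk d \<Phi>)
    \<and> card (Delta rk d \<Phi>) \<le> 2 * (length \<Phi>)^2 * (d + 2)
    \<and> (\<forall>h \<in> Delta rk d \<Phi>. \<forall>i \<le> d.
          bitlen (h i) \<le> int (d + 2) * (bitlen (norm_inf d (terms \<Phi>)) + 1))"
  using card_Delta_le[OF assms] bitlen_Delta_le[OF assms] by blast

end
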